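(* For $n\geq 1$, let $B_n(y,t)=\sum_{\sigma\in\mathcal{B}_n}y^{\mathsf{neg}\,\sigma}t^{\mathsf{des}_B\,\sigma}$. Then $$B_n(y, t)=(1+yt)^nP^{(\mathsf{cpk}, \mathsf{exc})}\left(\mathfrak{S}_n; \frac{(1+y)^2t}{(y+t)(1+yt)}, \frac{y+t}{1+yt}\right),$$ equivalently, $$P^{(\mathsf{cpk},\mathsf{exc})}\left(\mathfrak{S}_n; y,t\right)=\frac{1}{(1+uv)^{n}}B_{n}(u,v),$$ where $u=\frac{1+t^{2}-2yt-(1-t)\sqrt{(1+t)^{2}-4yt}}{2(1-y)t}$ and $v=\frac{(1+t)^{2}-2yt-(1+t)\sqrt{(1+t)^{2}-4yt}}{2yt}$.
   Context: $\mathcal{B}_n$ is the set of permutations $\sigma$ of $\{\pm1,\dots,\pm n\}$ with $\sigma(-i)=-\sigma(i)$; $\mathsf{neg}\,\sigma=\#\{i\in[n]:\sigma(i)<0\}$; $\mathsf{des}_B\,\sigma=\#\{i\in\{0,\dots,n-1\}:\sigma(i)>\sigma(i+1)\}$ with $\sigma(0)=0$ and the natural order. $\mathfrak{S}_n$ is the set of permutations of $[n]$; $P^{(\mathsf{cpk},\mathsf{exc})}(\mathfrak{S}_n;a,b)=\sum_{\sigma\in\mathfrak{S}_n}a^{\mathsf{cpk}\,\sigma}b^{\mathsf{exc}\,\sigma}$, where $\mathsf{exc}\,\sigma=\#\{i:\sigma(i)>i\}$ and $\mathsf{cpk}\,\sigma=\#\{x\in[n]:\sigma^{-1}(x)<x>\sigma(x)\}$.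 *)

theory Defs
  imports "HOL-Analysis.Analysis" "HOL-Combinatorics.Permutations"
begin

definition signed_perms :: "nat \<Rightarrow> (int \<Rightarrow> int) set" where
  "signed_perms n = {\<sigma>. \<sigma> permutes {i::int. i \<noteq> 0 \<and> \<bar>i\<bar> \<le> int n} \<and> (\<forall>i. \<sigma> (- i) = - \<sigma> i)}"

definition negB :: "nat \<Rightarrow> (int \<Rightarrow> int) \<Rightarrow> nat" where
  "negB n \<sigma> = card {i::int. 1 \<le> i \<and> i \<le> int n \<and> \<sigma> i < 0}"

text \<open>Type B descents, with \<open>\<sigma>(0) = 0\<close> (automatic, as 0 is fixed).\<close>
definition desB :: "nat \<Rightarrow> (int \<Rightarrow> int) \<Rightarrow> nat" where
  "desB n \<sigma> = card {i::int. 0 \<le> i \<and> i < int n \<and> \<sigma> i > \<sigma> (i + 1)}"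

definition Bpoly :: "nat \<Rightarrow> real \<Rightarrow> real \<Rightarrow> real" where
  "Bpoly n y t = (\<Sum>\<sigma>\<in>signed_perms n. y ^ negB n \<sigma> * t ^ desB n \<sigma>)"

definition exc :: "nat \<Rightarrow> (nat \<Rightarrow> nat) \<Rightarrow> nat" where
  "exc n \<sigma> = card {i. 1 \<le> i \<and> i \<le> n \<and> \<sigma> i > i}"

definition cpk :: "nat \<Rightarrow> (nat \<Rightarrow> nat) \<Rightarrow> nat" where
  "cpk n \<sigma> = card {x. 1 \<le> x \<and> x \<le> n \<and> inv \<sigma> x < x \<and> \<sigma> x < x}"

definition P_cpk_exc :: "nat \<Rightarrow> real \<Rightarrow> real \<Rightarrow> real" where
  "P_cpk_exc n a b = (\<Sum>\<sigma>\<in>{\<sigma>. \<sigma> permutes {1..n}}. a ^ cpk n \<sigma> * b ^ exc n \<sigma>)"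

end

theory Submission
  imports Defs "HOL-Combinatorics.Multiset_Permutations"
begin

text \<open>
  Both sides satisfy the same recurrence in \<open>n\<close>. Inserting \<open>n + 1\<close> into a permutation
  \<open>q\<close> of \<open>[n]\<close>, either as a fixed point or into a cycle just before some \<open>b\<close>, gives
  \<open>P\<^sub>n\<^sub>+\<^sub>1(a, b) = \<Sum>\<^sub>q a^cpk b^exc (1 + n a b + cpk (1 - a)(1 + b) + exc a (1 - b))\<close>.
  Inserting \<open>\<plusminus>(n + 1)\<close> anywhere into the window of a signed permutation gives
  \<open>B\<^sub>n\<^sub>+\<^sub>1 = (1 + y t + n (1 + y) t) B\<^sub>n + (1 + y)(1 - t) t B\<^sub>n'\<close>, the derivative in \<open>t\<close>
  accounting for the descents. Under the substitution \<open>a = (1 + y)\<^sup>2 t / ((y + t)(1 + y t))\<close>,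
  \<open>b = (y + t) / (1 + y t)\<close> the operator \<open>(1 + y)(1 - t) t d/dt\<close> multiplies \<open>1 + y t\<close>, \<open>a\<close>
  and \<open>b\<close> by explicit factors, which turns the first recurrence into the second for
  \<open>G\<^sub>n = (1 + y t)\<^sup>n P\<^sub>n(a, b)\<close>. Since \<open>B\<^sub>n\<close> and \<open>G\<^sub>n\<close> agree on an open set, so do their
  derivatives, and induction gives \<open>B\<^sub>n = G\<^sub>n\<close>. The second identity follows because
  \<open>(u, v)\<close> inverts the substitution: \<open>u + v = t (1 + u v)\<close> and
  \<open>(1 + u)\<^sup>2 v = y (u + v)(1 + u v)\<close>.
\<close>

section \<open>Inserting the largest letter into a permutation\<close>

definition cyclic_peak :: "(nat \<Rightarrow> nat) \<Rightarrow> nat \<Rightarrow> bool" where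
  "cyclic_peak q x \<longleftrightarrow> inv q x < x \<and> q x < x"

lemma cpk_eq_card_cyclic_peak: "cpk n q = card {x\<in>{1..n}. cyclic_peak q x}"
  unfolding cpk_def cyclic_peak_def by (rule arg_cong[where f = card]) auto

lemma exc_eq_card: "exc n q = card {i\<in>{1..n}. i < q i}"
  unfolding exc_def by (rule arg_cong[where f = card]) auto

text \<open>Composing \<open>q\<close> with the transposition of \<open>n + 1\<close> and \<open>b\<close> inserts \<open>n + 1\<close>
  into the cycle of \<open>q\<close> just before \<open>b\<close>.\<close>

lemma insert_before_apply:
  assumes q: "q permutes {1..n}" and b: "b \<in> {1..n}"
  defines "s \<equiv> Transposition.transpose (Suc n) b \<circ> q"
  shows "s (inv q b) = Suc n" "s (Suc n) = b" "\<And>x. x \<noteq> inv q b \<Longrightarrow> x \<noteq> Suc n \<Longrightarrow> s x = q x"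
proof -
  have qN: "q (Suc n) = Suc n" using permutes_not_in[OF q] by simp
  have qz: "q (inv q b) = b" using permutes_inverses(1)[OF q] .
  show "s (inv q b) = Suc n" "s (Suc n) = b" using qz qN b by (auto simp: s_def)
  fix x assume "x \<noteq> inv q b" "x \<noteq> Suc n"
  then have "q x \<noteq> b" "q x \<noteq> Suc n"
    using qz qN permutes_inj[OF q] by (metis injD)+
  then show "s x = q x" by (simp add: s_def transpose_apply_other)
qed

lemma insert_before_permutes:
  assumes "q permutes {1..n}" "b \<in> {1..n}"
  shows "Transposition.transpose (Suc n) b \<circ> q permutes {1..Suc n}"
proof (rule permutes_compose)
  show "q permutes {1..Suc n}" using assms(1) by (rule permutes_subset) auto
  show "Transposition.transpose (Suc n) b permutes {1..Suc n}"
    using assms(2) by (intro permutes_swap_id) auto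
qed

lemma insert_before_inv_apply:
  assumes q: "q permutes {1..n}" and b: "b \<in> {1..n}"
  defines "s \<equiv> Transposition.transpose (Suc n) b \<circ> q"
  shows "inv s b = Suc n" "inv s (Suc n) = inv q b" "\<And>x. x \<noteq> b \<Longrightarrow> x \<noteq> Suc n \<Longrightarrow> inv s x = inv q x"
proof -
  note s = insert_before_apply[OF q b, folded s_def]
  have sp: "s permutes {1..Suc n}" unfolding s_def using insert_before_permutes[OF q b] .
  show "inv s b = Suc n" "inv s (Suc n) = inv q b" using permutes_inv_eq[OF sp] s by auto
  fix x assume x: "x \<noteq> b" "x \<noteq> Suc n"
  have "inv q x \<noteq> inv q b" using x permutes_inv_eq[OF q] permutes_inverses(1)[OF q] by metis
  moreover have "inv q x \<noteq> Suc n" using x permutes_inv_eq[OF q] permutes_not_in[OF q] by force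
  ultimately show "inv s x = inv q x"
    using s(3) permutes_inverses(1)[OF q] permutes_inv_eq[OF sp] by simp
qed

lemma cyclic_peaks_insert_before:
  assumes q: "q permutes {1..n}" and b: "b \<in> {1..n}"
  defines "s \<equiv> Transposition.transpose (Suc n) b \<circ> q"
  shows "{x\<in>{1..Suc n}. cyclic_peak s x}
    = insert (Suc n) ({x\<in>{1..n}. cyclic_peak q x} - {inv q b, b})"
proof (intro set_eqI iffI)
  note s_apply = insert_before_apply[OF q b, folded s_def]
    and s_inv = insert_before_inv_apply[OF q b, folded s_def]
  fix x
  assume x: "x \<in> {x\<in>{1..Suc n}. cyclic_peak s x}"
  show "x \<in> insert (Suc n) ({x\<in>{1..n}. cyclic_peak q x} - {inv q b, b})"
  proof (cases "x = Suc n")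
    case False
    have "x \<noteq> inv q b" "x \<noteq> b" using x s_apply(1) s_inv(1) by (auto simp: cyclic_peak_def)
    then show ?thesis using x False s_apply(3) s_inv(3) by (auto simp: cyclic_peak_def)
  qed simp
next
  note s_apply = insert_before_apply[OF q b, folded s_def]
    and s_inv = insert_before_inv_apply[OF q b, folded s_def]
  fix x
  assume x: "x \<in> insert (Suc n) ({x\<in>{1..n}. cyclic_peak q x} - {inv q b, b})"
  have "inv q b \<in> {1..n}" using permutes_in_image[OF permutes_inv[OF q]] b by simp
  then have "cyclic_peak s (Suc n)" using s_apply(2) s_inv(2) b by (simp add: cyclic_peak_def)
  moreover have "cyclic_peak s x" if "x \<noteq> Suc n"
    using x that s_apply(3) s_inv(3) by (auto simp: cyclic_peak_def)
  ultimately show "x \<in> {x\<in>{1..Suc n}. cyclic_peak s x}" using x by auto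
qed

lemma cpk_insert_before:
  assumes q: "q permutes {1..n}" and b: "b \<in> {1..n}"
  shows "cpk (Suc n) (Transposition.transpose (Suc n) b \<circ> q)
    = cpk n q + of_bool (\<not> cyclic_peak q b \<and> \<not> cyclic_peak q (inv q b))"
proof -
  define z where "z = inv q b"
  let ?P = "{x\<in>{1..n}. cyclic_peak q x}"
  have z: "z \<in> {1..n}" "q z = b"
    using permutes_in_image[OF permutes_inv[OF q]] b permutes_inverses(1)[OF q] by (auto simp: z_def)
  have "cpk (Suc n) (Transposition.transpose (Suc n) b \<circ> q) = Suc (card (?P - {z, b}))"
    unfolding cpk_eq_card_cyclic_peak cyclic_peaks_insert_before[OF q b, folded z_def]
    by (subst card_insert_disjoint) auto
  moreover have excl: "\<not> (cyclic_peak q z \<and> cyclic_peak q b)"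
    using z by (auto simp: cyclic_peak_def z_def)
  consider "cyclic_peak q b" | "cyclic_peak q z" | "\<not> cyclic_peak q b" "\<not> cyclic_peak q z" by blast
  then have "Suc (card (?P - {z, b})) = card ?P + of_bool (\<not> cyclic_peak q b \<and> \<not> cyclic_peak q z)"
  proof cases
    case 1
    then have "?P - {z, b} = ?P - {b}" "b \<in> ?P" using excl b by auto
    then show ?thesis using 1 card_Suc_Diff1[of ?P b] by simp
  next
    case 2
    then have "?P - {z, b} = ?P - {z}" "z \<in> ?P" using excl z by auto
    then show ?thesis using 2 card_Suc_Diff1[of ?P z] by simp
  next
    case 3
    then have "?P - {z, b} = ?P" by auto
    then show ?thesis using 3 by simp
  qed
  ultimately show ?thesis unfolding cpk_eq_card_cyclic_peak[of n] z_def by simp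
qed

lemma exc_insert_before:
  assumes q: "q permutes {1..n}" and b: "b \<in> {1..n}"
  shows "exc (Suc n) (Transposition.transpose (Suc n) b \<circ> q) = exc n q + of_bool (b \<le> inv q b)"
proof -
  define s where "s = Transposition.transpose (Suc n) b \<circ> q"
  define z where "z = inv q b"
  note s = insert_before_apply[OF q b, folded s_def z_def]
  have z: "z \<in> {1..n}" "q z = b"
    using permutes_in_image[OF permutes_inv[OF q]] b permutes_inverses(1)[OF q] by (auto simp: z_def)
  have "{i\<in>{1..Suc n}. i < s i} = insert z {i\<in>{1..n}. i < q i}"
  proof (intro set_eqI iffI)
    fix x assume "x \<in> {i\<in>{1..Suc n}. i < s i}"
    then show "x \<in> insert z {i\<in>{1..n}. i < q i}"
      using s b by (cases "x = Suc n"; cases "x = z") auto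
  next
    fix x assume "x \<in> insert z {i\<in>{1..n}. i < q i}"
    then show "x \<in> {i\<in>{1..Suc n}. i < s i}"
      using s z by (cases "x = z") auto
  qed
  then show ?thesis using z by (auto simp: exc_eq_card s_def z_def card_insert_if)
qed

lemma cpk_exc_Suc_permutes:
  assumes q: "q permutes {1..n}"
  shows "cpk (Suc n) q = cpk n q" "exc (Suc n) q = exc n q"
proof -
  have "q (Suc n) = Suc n" using permutes_not_in[OF q] by simp
  moreover have "inv q (Suc n) = Suc n" using permutes_inv_eq[OF q] calculation by simp
  ultimately show "cpk (Suc n) q = cpk n q" "exc (Suc n) q = exc n q"
    unfolding cpk_eq_card_cyclic_peak exc_eq_card cyclic_peak_def
    by (auto intro!: arg_cong[where f = card] simp: le_Suc_eq)
qed

lemma sum_insert_before_weight: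
  fixes a \<beta> :: real
  assumes q: "q permutes {1..n}"
  shows "(\<Sum>b\<in>{1..n}. a ^ of_bool (\<not> cyclic_peak q b \<and> \<not> cyclic_peak q (inv q b))
      * \<beta> ^ of_bool (b \<le> inv q b))
    = n * a * \<beta> + cpk n q * (1 - a) * (1 + \<beta>) + exc n q * a * (1 - \<beta>)"
proof -
  txt \<open>A cyclic peak at \<open>b\<close> forces \<open>inv q b < b\<close> and one at \<open>inv q b\<close> forces the opposite,
    so the weight is an affine combination of three indicators with known sums.\<close>
  have weight: "a ^ of_bool (\<not> cyclic_peak q b \<and> \<not> cyclic_peak q (inv q b)) * \<beta> ^ of_bool (b \<le> inv q b)
      = a * \<beta> + of_bool (cyclic_peak q b) * (1 - a * \<beta>)
        + of_bool (cyclic_peak q (inv q b)) * (\<beta> - a * \<beta>)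
        + (of_bool (inv q b < b) - of_bool (cyclic_peak q b)) * (a - a * \<beta>)" for b
    using permutes_inverses(1)[OF q, of b] unfolding cyclic_peak_def
    by (cases "cyclic_peak q b"; cases "cyclic_peak q (inv q b)"; cases "inv q b < b") auto
  have peaks: "(\<Sum>b\<in>{1..n}. of_bool (cyclic_peak q b)) = real (cpk n q)"
    by (simp add: cpk_eq_card_cyclic_peak Int_def)
  have peaks_inv: "(\<Sum>b\<in>{1..n}. of_bool (cyclic_peak q (inv q b))) = real (cpk n q)"
    using sum.permute[OF permutes_inv[OF q], of "\<lambda>b. of_bool (cyclic_peak q b) :: real"] peaks
    unfolding comp_def by linarith
  have excs: "(\<Sum>b\<in>{1..n}. of_bool (inv q b < b)) = real (exc n q)"
    using sum.permute[OF q, of "\<lambda>b. of_bool (inv q b < b) :: real"]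
    by (simp add: comp_def permutes_inverses(2)[OF q] exc_eq_card Int_def)
  have "(\<Sum>b\<in>{1..n}. a ^ of_bool (\<not> cyclic_peak q b \<and> \<not> cyclic_peak q (inv q b))
      * \<beta> ^ of_bool (b \<le> inv q b))
    = n * (a * \<beta>) + (\<Sum>b\<in>{1..n}. of_bool (cyclic_peak q b)) * (1 - a * \<beta>)
      + (\<Sum>b\<in>{1..n}. of_bool (cyclic_peak q (inv q b))) * (\<beta> - a * \<beta>)
      + ((\<Sum>b\<in>{1..n}. of_bool (inv q b < b)) - (\<Sum>b\<in>{1..n}. of_bool (cyclic_peak q b))) * (a - a * \<beta>)"
    unfolding weight
    by (simp add: sum.distrib sum_subtractf sum_distrib_right left_diff_distrib del: sum_of_bool_eq)
  also have "\<dots> = n * a * \<beta> + cpk n q * (1 - a) * (1 + \<beta>) + exc n q * a * (1 - \<beta>)"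
    unfolding peaks peaks_inv excs by (simp add: algebra_simps)
  finally show ?thesis .
qed

lemma P_cpk_exc_Suc:
  fixes a \<beta> :: real
  shows "P_cpk_exc (Suc n) a \<beta> = (\<Sum>q | q permutes {1..n}. a ^ cpk n q * \<beta> ^ exc n q
    * (1 + n * a * \<beta> + cpk n q * (1 - a) * (1 + \<beta>) + exc n q * a * (1 - \<beta>)))"
proof -
  let ?f = "\<lambda>s. a ^ cpk (Suc n) s * \<beta> ^ exc (Suc n) s"
  let ?ins = "\<lambda>b q. Transposition.transpose (Suc n) b \<circ> q"
  have "{1..Suc n} = insert (Suc n) {1..n}" by auto
  then have "P_cpk_exc (Suc n) a \<beta> = (\<Sum>b\<in>insert (Suc n) {1..n}. \<Sum>q | q permutes {1..n}. ?f (?ins b q))"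
    unfolding P_cpk_exc_def by (simp add: sum_over_permutations_insert)
  also have "\<dots> = (\<Sum>q | q permutes {1..n}. \<Sum>b\<in>insert (Suc n) {1..n}. ?f (?ins b q))"
    by (rule sum.swap)
  also have "\<dots> = (\<Sum>q | q permutes {1..n}. a ^ cpk n q * \<beta> ^ exc n q
    * (1 + n * a * \<beta> + cpk n q * (1 - a) * (1 + \<beta>) + exc n q * a * (1 - \<beta>)))"
  proof (rule sum.cong[OF refl])
    fix q assume "q \<in> {q. q permutes {1..n}}"
    then have q: "q permutes {1..n}" by simp
    have "(\<Sum>b\<in>insert (Suc n) {1..n}. ?f (?ins b q)) = ?f q + (\<Sum>b\<in>{1..n}. ?f (?ins b q))"
      by simp
    also have "\<dots> = a ^ cpk n q * \<beta> ^ exc n q * (1 + (\<Sum>b\<in>{1..n}.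
        a ^ of_bool (\<not> cyclic_peak q b \<and> \<not> cyclic_peak q (inv q b)) * \<beta> ^ of_bool (b \<le> inv q b)))"
      by (simp add: cpk_exc_Suc_permutes[OF q] cpk_insert_before[OF q] exc_insert_before[OF q]
          power_add sum_distrib_left algebra_simps)
    finally show "(\<Sum>b\<in>insert (Suc n) {1..n}. ?f (?ins b q)) = a ^ cpk n q * \<beta> ^ exc n q
      * (1 + n * a * \<beta> + cpk n q * (1 - a) * (1 + \<beta>) + exc n q * a * (1 - \<beta>))"
      unfolding sum_insert_before_weight[OF q] by (simp add: algebra_simps)
  qed
  finally show ?thesis .
qed

section \<open>Signed permutations as signed words\<close>

definition signed_words :: "nat \<Rightarrow> int list set" where
  "signed_words n = {w. map abs w \<in> permutations_of_set {1..int n}}"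

lemma signed_wordsD:
  assumes "w \<in> signed_words n"
  shows "length w = n" "distinct (map abs w)" "set (map abs w) = {1..int n}"
proof -
  have w: "map abs w \<in> permutations_of_set {1..int n}" using assms by (simp add: signed_words_def)
  then show "distinct (map abs w)" "set (map abs w) = {1..int n}"
    by (simp_all add: permutations_of_set_def)
  show "length w = n" using length_finite_permutations_of_set[OF w] by simp
qed

lemma signed_words_abs_less:
  assumes "w \<in> signed_words n" "x \<in> set w"
  shows "\<bar>x\<bar> < int (Suc n)"
proof -
  have "\<bar>x\<bar> \<in> set (map abs w)" using assms(2) by simp
  then show ?thesis using signed_wordsD(3)[OF assms(1)] by auto
qed

lemma signed_wordsI:
  "distinct (map abs w) \<Longrightarrow> set (map abs w) = {1..int n} \<Longrightarrow> w \<in> signed_words n"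
  by (simp add: signed_words_def permutations_of_set_def)

fun des_from :: "int \<Rightarrow> int list \<Rightarrow> nat" where
  "des_from p [] = 0"
| "des_from p (x # w) = of_bool (x < p) + des_from x w"

definition negatives :: "int list \<Rightarrow> nat" where
  "negatives w = length (filter (\<lambda>x. x < 0) w)"

definition window :: "nat \<Rightarrow> (int \<Rightarrow> int) \<Rightarrow> int list" where
  "window n \<sigma> = map \<sigma> [1..int n]"

abbreviation signed_interval :: "nat \<Rightarrow> int set" where
  "signed_interval n \<equiv> {i. i \<noteq> 0 \<and> \<bar>i\<bar> \<le> int n}"

lemma signed_permsD:
  assumes "\<sigma> \<in> signed_perms n"
  shows "\<sigma> permutes signed_interval n" "\<sigma> (- i) = - \<sigma> i" "\<sigma> 0 = 0"
proof -
  show p: "\<sigma> permutes signed_interval n" "\<sigma> (- i) = - \<sigma> i"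
    using assms unfolding signed_perms_def by auto
  show "\<sigma> 0 = 0" using permutes_not_in[OF p(1)] by simp
qed

lemma window_in_signed_words:
  assumes \<sigma>: "\<sigma> \<in> signed_perms n"
  shows "window n \<sigma> \<in> signed_words n"
proof -
  note F = signed_permsD[OF \<sigma>]
  have img: "\<bar>\<sigma> i\<bar> \<in> {1..int n}" if "i \<in> {1..int n}" for i
    using permutes_in_image[OF F(1), of i] that by auto
  have "inj_on (abs \<circ> \<sigma>) {1..int n}"
  proof (rule inj_onI)
    fix i j assume ij: "i \<in> {1..int n}" "j \<in> {1..int n}" "(abs \<circ> \<sigma>) i = (abs \<circ> \<sigma>) j"
    then have "\<sigma> i = \<sigma> j \<or> \<sigma> i = \<sigma> (- j)" using F(2)[of j] by (auto simp: abs_if split: if_splits)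
    then have "i = j \<or> i = - j" using permutes_inj[OF F(1)] by (auto dest: injD)
    then show "i = j" using ij by auto
  qed
  then have d: "distinct (map abs (window n \<sigma>))" by (simp add: window_def distinct_map)
  have sub: "set (map abs (window n \<sigma>)) \<subseteq> {1..int n}" using img by (auto simp: window_def)
  have "card (set (map abs (window n \<sigma>))) = card {1..int n}"
    using distinct_card[OF d] by (simp add: window_def)
  then have "set (map abs (window n \<sigma>)) = {1..int n}" using card_subset_eq[OF _ sub] by simp
  with d show ?thesis by (rule signed_wordsI)
qed

lemma inj_on_window: "inj_on (window n) (signed_perms n)"
proof (rule inj_onI)
  fix \<sigma> \<tau> assume \<sigma>: "\<sigma> \<in> signed_perms n" and \<tau>: "\<tau> \<in> signed_perms n"
    and eq: "window n \<sigma> = window n \<tau>"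
  have pos: "\<sigma> i = \<tau> i" if "i \<in> {1..int n}" for i
    using eq that by (simp add: window_def)
  show "\<sigma> = \<tau>"
  proof
    fix x
    consider "x \<in> {1..int n}" | "- x \<in> {1..int n}" | "x \<notin> signed_interval n" by force
    then show "\<sigma> x = \<tau> x"
    proof cases
      case 2
      then show ?thesis
        using pos[of "- x"] signed_permsD(2)[OF \<sigma>, of x] signed_permsD(2)[OF \<tau>, of x] by simp
    next
      case 3
      then show ?thesis
        using signed_permsD(1)[OF \<sigma>] signed_permsD(1)[OF \<tau>] by (simp add: permutes_not_in)
    qed (rule pos)
  qed
qed

lemma signed_words_subset_window_image: "signed_words n \<subseteq> window n ` signed_perms n"
proof
  fix w assume w: "w \<in> signed_words n"
  note W = signed_wordsD[OF w]
  define \<sigma> where "\<sigma> i = (if i \<in> signed_interval n then sgn i * w ! nat (\<bar>i\<bar> - 1) else i)" for i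
  have absw: "\<bar>w ! nat (\<bar>i\<bar> - 1)\<bar> \<in> {1..int n}" if "i \<in> signed_interval n" for i
  proof -
    have "nat (\<bar>i\<bar> - 1) < length w" using that W(1) by auto
    then have "\<bar>w ! nat (\<bar>i\<bar> - 1)\<bar> \<in> set (map abs w)" by (metis length_map nth_map nth_mem)
    then show ?thesis using W(3) by simp
  qed
  have abs_\<sigma>: "\<bar>\<sigma> i\<bar> = \<bar>w ! nat (\<bar>i\<bar> - 1)\<bar>" if "i \<in> signed_interval n" for i
    using that by (simp add: \<sigma>_def abs_mult abs_sgn_eq)
  have odd: "\<sigma> (- i) = - \<sigma> i" for i by (simp add: \<sigma>_def)
  have maps: "\<sigma> ` signed_interval n \<subseteq> signed_interval n"
    using abs_\<sigma> absw by fastforce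
  have inj: "inj_on \<sigma> (signed_interval n)"
  proof (rule inj_onI)
    fix i j assume ij: "i \<in> signed_interval n" "j \<in> signed_interval n" "\<sigma> i = \<sigma> j"
    have k: "nat (\<bar>i\<bar> - 1) < length w" "nat (\<bar>j\<bar> - 1) < length w" using ij(1,2) W(1) by auto
    have "map abs w ! nat (\<bar>i\<bar> - 1) = map abs w ! nat (\<bar>j\<bar> - 1)"
      using abs_\<sigma>[OF ij(1)] abs_\<sigma>[OF ij(2)] ij(3) k by simp
    then have "nat (\<bar>i\<bar> - 1) = nat (\<bar>j\<bar> - 1)"
      using nth_eq_iff_index_eq[OF W(2)] k by simp
    then have "\<bar>i\<bar> = \<bar>j\<bar>" using ij(1,2) eq_nat_nat_iff[of "\<bar>i\<bar> - 1" "\<bar>j\<bar> - 1"] by auto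
    moreover have "\<sigma> i \<noteq> 0" using abs_\<sigma>[OF ij(1)] absw[OF ij(1)] by auto
    ultimately show "i = j" using odd[of j] ij(3) by (auto simp: abs_if split: if_splits)
  qed
  have "finite (signed_interval n)" by (rule finite_subset[of _ "{- int n..int n}"]) auto
  then have "bij_betw \<sigma> (signed_interval n) (signed_interval n)"
    using endo_inj_surj[OF _ maps inj] inj by (simp add: bij_betw_def)
  then have "\<sigma> permutes signed_interval n" by (rule bij_imp_permutes) (auto simp: \<sigma>_def)
  then have "\<sigma> \<in> signed_perms n" unfolding signed_perms_def using odd by simp
  moreover have "window n \<sigma> = w"
    by (rule nth_equalityI) (auto simp: window_def W(1) \<sigma>_def nth_upto)
  ultimately show "w \<in> window n ` signed_perms n" by blast
qed

lemma bij_betw_window: "bij_betw (window n) (signed_perms n) (signed_words n)"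
  unfolding bij_betw_def
  using inj_on_window window_in_signed_words signed_words_subset_window_image by blast

lemma negB_eq_negatives_window: "negB n \<sigma> = negatives (window n \<sigma>)"
proof -
  have "negatives (window n \<sigma>) = length (filter (\<lambda>i. \<sigma> i < 0) [1..int n])"
    by (simp add: negatives_def window_def filter_map comp_def)
  also have "\<dots> = card {i\<in>{1..int n}. \<sigma> i < 0}"
    by (subst distinct_length_filter) (auto intro: arg_cong[where f = card])
  also have "\<dots> = negB n \<sigma>" unfolding negB_def by (rule arg_cong[where f = card]) auto
  finally show ?thesis by simp
qed

lemma des_from_eq_sum: "des_from p w = (\<Sum>j<length w. of_bool (w ! j < (p # w) ! j))"
proof (induction w arbitrary: p)
  case (Cons x w)
  show ?case unfolding length_Cons sum.lessThan_Suc_shift using Cons.IH[of x] by simp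
qed simp

lemma desB_eq_des_from_window:
  assumes "\<sigma> 0 = 0"
  shows "desB n \<sigma> = des_from 0 (window n \<sigma>)"
proof -
  let ?w = "window n \<sigma>"
  have "?w ! j = \<sigma> (int j + 1)" "(0 # ?w) ! j = \<sigma> (int j)" if "j < n" for j
    using that assms by (auto simp: window_def nth_Cons' add.commute)
  then have "des_from 0 ?w = card {j. j < n \<and> \<sigma> (int j + 1) < \<sigma> (int j)}"
    by (simp add: des_from_eq_sum window_def Int_def)
  also have "\<dots> = card (int ` {j. j < n \<and> \<sigma> (int j + 1) < \<sigma> (int j)})"
    by (rule card_image[symmetric]) simp
  also have "int ` {j. j < n \<and> \<sigma> (int j + 1) < \<sigma> (int j)} = {i. 0 \<le> i \<and> i < int n \<and> \<sigma> (i + 1) < \<sigma> i}"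
    by (auto intro!: image_eqI[of _ _ "nat i" for i])
  finally show ?thesis unfolding desB_def by simp
qed

lemma Bpoly_eq_sum_signed_words:
  "Bpoly n y t = (\<Sum>w\<in>signed_words n. y ^ negatives w * t ^ des_from 0 w)"
  unfolding Bpoly_def sum.reindex_bij_betw[OF bij_betw_window, symmetric]
  by (intro sum.cong refl) (simp add: negB_eq_negatives_window desB_eq_des_from_window signed_permsD(3))

section \<open>Inserting the letter \<open>\<plusminus>(n + 1)\<close> into a signed word\<close>

definition insert_at :: "nat \<Rightarrow> 'a \<Rightarrow> 'a list \<Rightarrow> 'a list" where
  "insert_at j x w = take j w @ x # drop j w"

lemma length_insert_at [simp]: "length (insert_at j x w) = Suc (length w)"
  unfolding insert_at_def by simp

lemma nth_insert_at: "j \<le> length w \<Longrightarrow> insert_at j x w ! j = x"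
  unfolding insert_at_def by (simp add: nth_append)

lemma remove_insert_at: "j \<le> length w \<Longrightarrow> take j (insert_at j x w) @ drop (Suc j) (insert_at j x w) = w"
  unfolding insert_at_def by simp

lemma map_insert_at: "map f (insert_at j x w) = insert_at j (f x) (map f w)"
  unfolding insert_at_def by (simp add: take_map drop_map)

lemma set_insert_at: "set (insert_at j x w) = insert x (set w)"
proof -
  have "set (take j w) \<union> set (drop j w) = set w" by (metis set_append append_take_drop_id)
  then show ?thesis unfolding insert_at_def by auto
qed

lemma distinct_insert_at: "distinct (insert_at j x w) \<longleftrightarrow> x \<notin> set w \<and> distinct w"
proof -
  have d: "distinct w \<longleftrightarrow>
      distinct (take j w) \<and> distinct (drop j w) \<and> set (take j w) \<inter> set (drop j w) = {}"
    using distinct_append[of "take j w" "drop j w"] by (simp only: append_take_drop_id)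
  have s: "set w = set (take j w) \<union> set (drop j w)" by (metis set_append append_take_drop_id)
  show ?thesis unfolding insert_at_def distinct_append d s by auto
qed

lemma insert_at_Cons: "insert_at 0 x w = x # w" "insert_at (Suc j) x (y # w) = y # insert_at j x w"
  unfolding insert_at_def by simp_all

lemma insert_at_nth_remove:
  assumes "j < length L"
  shows "insert_at j (L ! j) (take j L @ drop (Suc j) L) = L"
  using assms id_take_nth_drop[OF assms] by (simp add: insert_at_def min_def)

lemma insert_at_eq_insert_atD:
  assumes eq: "insert_at j x w = insert_at j' x' w'" and "f x = f x'"
    and dist: "distinct (map f (insert_at j x w))"
    and "j \<le> length w" "j' \<le> length w'"
  shows "j = j' \<and> x = x' \<and> w = w'"
proof -
  let ?L = "insert_at j x w"
  have "length w = length w'" using arg_cong[OF eq, of length] by simp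
  moreover have "?L ! j = x" by (rule nth_insert_at[OF assms(4)])
  moreover have "?L ! j' = x'" unfolding eq by (rule nth_insert_at[OF assms(5)])
  ultimately have "map f ?L ! j = map f ?L ! j'"
    using assms by simp
  then have jj: "j = j'"
    using nth_eq_iff_index_eq[OF dist] assms(4,5) \<open>length w = length w'\<close> by simp
  moreover have "x = x'" using \<open>?L ! j = x\<close> \<open>?L ! j' = x'\<close> jj by simp
  moreover have "w = w'"
    using remove_insert_at[OF assms(4), of x] remove_insert_at[OF assms(5), of x'] eq jj by simp
  ultimately show ?thesis by blast
qed

lemma insert_at_in_signed_words:
  assumes w: "w \<in> signed_words n" and "j \<le> n" and s: "\<bar>s\<bar> = int (Suc n)"
  shows "insert_at j s w \<in> signed_words (Suc n)"
proof (rule signed_wordsI)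
  have m: "map abs (insert_at j s w) = insert_at j (int (Suc n)) (map abs w)"
    unfolding map_insert_at s ..
  show "distinct (map abs (insert_at j s w))"
    unfolding m distinct_insert_at using signed_wordsD[OF w] by auto
  show "set (map abs (insert_at j s w)) = {1..int (Suc n)}"
    unfolding m set_insert_at signed_wordsD(3)[OF w] by auto
qed

lemma signed_words_SucE:
  assumes L: "L \<in> signed_words (Suc n)"
  obtains w j s where "w \<in> signed_words n" "j \<le> n" "\<bar>s\<bar> = int (Suc n)" "L = insert_at j s w"
proof -
  note LD = signed_wordsD[OF L]
  have "int (Suc n) \<in> set (map abs L)" using LD(3) by simp
  then obtain j where j: "j < length L" "\<bar>L ! j\<bar> = int (Suc n)"
    by (auto simp: in_set_conv_nth)
  define w where "w = take j L @ drop (Suc j) L"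
  have Lw: "L = insert_at j (L ! j) w"
    unfolding w_def using insert_at_nth_remove[OF j(1)] by simp
  have m: "map abs L = insert_at j (int (Suc n)) (map abs w)"
    using map_insert_at[of abs j "L ! j" w] Lw j(2) by simp
  have dw: "distinct (map abs w)" "int (Suc n) \<notin> set (map abs w)"
    using LD(2) unfolding m distinct_insert_at by auto
  have "insert (int (Suc n)) (set (map abs w)) = {1..int (Suc n)}"
    using LD(3) unfolding m set_insert_at .
  then have "set (map abs w) = {1..int (Suc n)} - {int (Suc n)}"
    using dw(2) by (metis Diff_insert_absorb)
  then have "set (map abs w) = {1..int n}" by auto
  then have "w \<in> signed_words n" using dw(1) by (rule signed_wordsI[rotated])
  moreover have "j \<le> n" using j(1) LD(1) by simp
  ultimately show ?thesis using that Lw j(2) by blast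
qed

lemma bij_betw_insert_at_signed_words:
  "bij_betw (\<lambda>(w, j, s). insert_at j s w)
     (signed_words n \<times> {..n} \<times> {int (Suc n), - int (Suc n)}) (signed_words (Suc n))"
proof (rule bij_betwI')
  fix X Y assume X: "X \<in> signed_words n \<times> {..n} \<times> {int (Suc n), - int (Suc n)}"
    and Y: "Y \<in> signed_words n \<times> {..n} \<times> {int (Suc n), - int (Suc n)}"
  obtain w j s w' j' s' where XY: "X = (w, j, s)" "Y = (w', j', s')" by (cases X, cases Y) auto
  have w: "w \<in> signed_words n" "j \<le> length w" "\<bar>s\<bar> = int (Suc n)"
    and w': "w' \<in> signed_words n" "j' \<le> length w'" "\<bar>s'\<bar> = int (Suc n)"
    using X Y XY signed_wordsD(1) by auto
  have "distinct (map abs (insert_at j s w))"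
    using signed_wordsD(2)[OF insert_at_in_signed_words[OF w(1) _ w(3)]] w signed_wordsD(1) by simp
  then show "((\<lambda>(w, j, s). insert_at j s w) X = (\<lambda>(w, j, s). insert_at j s w) Y) \<longleftrightarrow> X = Y"
    using insert_at_eq_insert_atD[of j s w j' s' w' abs] w w' XY by auto
next
  fix X assume "X \<in> signed_words n \<times> {..n} \<times> {int (Suc n), - int (Suc n)}"
  then show "(\<lambda>(w, j, s). insert_at j s w) X \<in> signed_words (Suc n)"
    by (auto intro: insert_at_in_signed_words)
next
  fix L assume "L \<in> signed_words (Suc n)"
  then obtain w j s where "w \<in> signed_words n" "j \<le> n" "\<bar>s\<bar> = int (Suc n)" "L = insert_at j s w"
    by (rule signed_words_SucE)
  then show "\<exists>X\<in>signed_words n \<times> {..n} \<times> {int (Suc n), - int (Suc n)}.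
      L = (\<lambda>(w, j, s). insert_at j s w) X"
    by (intro bexI[of _ "(w, j, s)"]) (auto simp: abs_if split: if_splits)
qed

lemma negatives_insert_at: "negatives (insert_at j x w) = negatives w + of_bool (x < 0)"
proof -
  have "length (filter (\<lambda>x. x < 0) w)
      = length (filter (\<lambda>x. x < 0) (take j w)) + length (filter (\<lambda>x. x < 0) (drop j w))"
    by (metis append_take_drop_id filter_append length_append)
  then show ?thesis unfolding negatives_def insert_at_def by simp
qed

text \<open>A letter \<open>N\<close> exceeding all others in absolute value, put into slot \<open>j\<close>, replaces the
  pair \<open>((p # w) ! j, w ! j)\<close> by an ascent and a descent (for \<open>N\<close>) or a descent and an
  ascent (for \<open>-N\<close>); at the end of the word it adds no descent, respectively one.\<close>

lemma des_from_insert_at: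
  assumes "\<forall>x\<in>set w. \<bar>x\<bar> < N" "\<bar>p\<bar> < N" "j \<le> length w"
  shows "des_from p (insert_at j N w)
      = des_from p w + of_bool (j < length w \<and> \<not> w ! j < (p # w) ! j)"
    and "des_from p (insert_at j (- N) w)
      = des_from p w + of_bool (j = length w \<or> \<not> w ! j < (p # w) ! j)"
  using assms
proof (induction w arbitrary: p j)
  case Nil
  { case 1 then show ?case by (simp add: insert_at_def) }
  { case 2 then show ?case by (simp add: insert_at_def) }
next
  case (Cons y w)
  { case 1
    show ?case
    proof (cases j)
      case 0
      then show ?thesis using 1 by (cases w) (auto simp: insert_at_Cons)
    next
      case (Suc j')
      then show ?thesis using 1 Cons.IH(1)[of y j'] by (auto simp: insert_at_Cons)
    qed }
  { case 2
    show ?case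
    proof (cases j)
      case 0
      then show ?thesis using 2 by (cases w) (auto simp: insert_at_Cons)
    next
      case (Suc j')
      then show ?thesis using 2 Cons.IH(2)[of y j'] by (auto simp: insert_at_Cons)
    qed }
qed

lemma sum_des_from_insert_at:
  fixes t :: real
  assumes "\<forall>x\<in>set w. \<bar>x\<bar> < N" "\<bar>p\<bar> < N"
  shows "(\<Sum>j\<le>length w. t ^ des_from p (insert_at j N w))
      = t ^ des_from p w * (length w * t + des_from p w * (1 - t) + 1)"
    and "(\<Sum>j\<le>length w. t ^ des_from p (insert_at j (- N) w))
      = t ^ des_from p w * (length w * t + des_from p w * (1 - t) + t)"
proof -
  let ?desc = "\<lambda>j. w ! j < (p # w) ! j"
  have slots: "{..length w} = insert (length w) {..<length w}" by auto
  have "(\<Sum>j<length w. t ^ of_bool (\<not> ?desc j)) = (\<Sum>j<length w. t + of_bool (?desc j) * (1 - t))"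
    by (intro sum.cong) auto
  also have "\<dots> = length w * t + des_from p w * (1 - t)"
    by (simp add: sum.distrib des_from_eq_sum of_nat_sum sum_distrib_right del: sum_of_bool_eq)
  finally have inner: "(\<Sum>j<length w. t ^ of_bool (\<not> ?desc j)) = length w * t + des_from p w * (1 - t)" .
  have "(\<Sum>j\<le>length w. t ^ des_from p (insert_at j N w))
      = t ^ des_from p w * (\<Sum>j<length w. t ^ of_bool (\<not> ?desc j)) + t ^ des_from p w"
    using des_from_insert_at(1)[OF assms] by (simp add: slots power_add sum_distrib_left)
  then show "(\<Sum>j\<le>length w. t ^ des_from p (insert_at j N w))
      = t ^ des_from p w * (length w * t + des_from p w * (1 - t) + 1)"
    unfolding inner by (simp add: algebra_simps)
  have "(\<Sum>j\<le>length w. t ^ des_from p (insert_at j (- N) w))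
      = t ^ des_from p w * (\<Sum>j<length w. t ^ of_bool (\<not> ?desc j)) + t ^ des_from p w * t"
    using des_from_insert_at(2)[OF assms] by (simp add: slots power_add sum_distrib_left)
  then show "(\<Sum>j\<le>length w. t ^ des_from p (insert_at j (- N) w))
      = t ^ des_from p w * (length w * t + des_from p w * (1 - t) + t)"
    unfolding inner by (simp add: algebra_simps)
qed

lemma Bpoly_Suc_eq_sum:
  fixes y t :: real
  shows "Bpoly (Suc n) y t = (\<Sum>w\<in>signed_words n. y ^ negatives w * t ^ des_from 0 w
     * (1 + y * t + (1 + y) * (n * t + des_from 0 w * (1 - t))))"
proof -
  let ?f = "\<lambda>w. y ^ negatives w * t ^ des_from 0 w"
  let ?N = "int (Suc n)"
  have "Bpoly (Suc n) y t = (\<Sum>(w, j, s)\<in>signed_words n \<times> {..n} \<times> {?N, - ?N}. ?f (insert_at j s w))"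
    unfolding Bpoly_eq_sum_signed_words
      sum.reindex_bij_betw[OF bij_betw_insert_at_signed_words, symmetric]
    by (simp add: case_prod_beta)
  also have "\<dots> = (\<Sum>w\<in>signed_words n. \<Sum>j\<le>n. ?f (insert_at j ?N w) + ?f (insert_at j (- ?N) w))"
    by (simp add: sum.cartesian_product[symmetric])
  also have "\<dots> = (\<Sum>w\<in>signed_words n. ?f w * (1 + y * t + (1 + y) * (n * t + des_from 0 w * (1 - t))))"
  proof (rule sum.cong[OF refl])
    fix w assume w: "w \<in> signed_words n"
    have bound: "\<forall>x\<in>set w. \<bar>x\<bar> < ?N" "\<bar>0\<bar> < ?N" using signed_words_abs_less[OF w] by auto
    show "(\<Sum>j\<le>n. ?f (insert_at j ?N w) + ?f (insert_at j (- ?N) w))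
        = ?f w * (1 + y * t + (1 + y) * (n * t + des_from 0 w * (1 - t)))"
      using sum_des_from_insert_at[OF bound, of t] signed_wordsD(1)[OF w]
      by (simp add: negatives_insert_at sum.distrib flip: sum_distrib_left) (simp add: algebra_simps)
  qed
  finally show ?thesis .
qed

lemma Bpoly_Suc:
  fixes y t :: real
  shows "Bpoly (Suc n) y t
    = (1 + y * t + (1 + y) * n * t) * Bpoly n y t + (1 + y) * (1 - t) * t * deriv (Bpoly n y) t"
proof -
  let ?f = "\<lambda>w. y ^ negatives w * t ^ des_from 0 w"
  let ?d = "\<lambda>w. des_from 0 w"
  have D: "(Bpoly n y has_field_derivative
      (\<Sum>w\<in>signed_words n. y ^ negatives w * (?d w * t ^ (?d w - 1)))) (at t)"
    unfolding Bpoly_eq_sum_signed_words[abs_def] by (auto intro!: derivative_eq_intros simp: mult_ac)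
  have deriv: "t * deriv (Bpoly n y) t = (\<Sum>w\<in>signed_words n. ?f w * ?d w)"
    unfolding DERIV_imp_deriv[OF D] sum_distrib_left
  proof (intro sum.cong refl)
    fix w
    show "t * (y ^ negatives w * (?d w * t ^ (?d w - 1))) = ?f w * ?d w"
      by (cases "?d w") auto
  qed
  have "Bpoly (Suc n) y t
      = (\<Sum>w\<in>signed_words n. (1 + y * t + (1 + y) * n * t) * ?f w + (1 + y) * (1 - t) * (?f w * ?d w))"
    unfolding Bpoly_Suc_eq_sum by (intro sum.cong refl) (simp add: algebra_simps)
  also have "\<dots> = (1 + y * t + (1 + y) * n * t) * Bpoly n y t
      + (1 + y) * (1 - t) * (\<Sum>w\<in>signed_words n. ?f w * ?d w)"
    by (simp add: Bpoly_eq_sum_signed_words sum.distrib sum_distrib_left)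
  finally show ?thesis unfolding deriv[symmetric] by (simp add: mult.assoc)
qed

section \<open>The substitution\<close>

definition cpk_subst :: "real \<Rightarrow> real \<Rightarrow> real" where
  "cpk_subst y t = (1 + y)\<^sup>2 * t / ((y + t) * (1 + y * t))"

definition exc_subst :: "real \<Rightarrow> real \<Rightarrow> real" where
  "exc_subst y t = (y + t) / (1 + y * t)"

lemma has_field_derivative_cpk_subst:
  assumes "y + t \<noteq> 0" "1 + y * t \<noteq> 0"
  shows "(cpk_subst y has_field_derivative
      (1 + y)\<^sup>2 * y * (1 - t\<^sup>2) / ((y + t) * (1 + y * t))\<^sup>2) (at t)"
proof -
  have "(y + t) * (1 + y * t) \<noteq> 0" using assms by simp
  then show ?thesis
    unfolding cpk_subst_def[abs_def] using assms
    by (auto intro!: derivative_eq_intros simp: field_simps power2_eq_square)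
qed

lemma has_field_derivative_exc_subst:
  assumes "1 + y * t \<noteq> 0"
  shows "(exc_subst y has_field_derivative (1 - y\<^sup>2) / (1 + y * t)\<^sup>2) (at t)"
  unfolding exc_subst_def[abs_def] using assms
  by (auto intro!: derivative_eq_intros simp: field_simps power2_eq_square)

text \<open>\<open>K\<close> times the derivative of each of \<open>C\<close>, \<open>a\<close>, \<open>b\<close> (namely \<open>y\<close> and the two derivatives
  above) is that function times a polynomial in \<open>C\<close>, \<open>a\<close>, \<open>b\<close>.\<close>

lemma subst_deriv_identities:
  assumes "y + t \<noteq> 0" "1 + y * t \<noteq> 0"
  defines "K \<equiv> (1 + y) * (1 - t) * t" and "C \<equiv> 1 + y * t"
    and "a \<equiv> cpk_subst y t" and "b \<equiv> exc_subst y t"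
  shows "K * y = (C * a * b - (1 + y) * t) * C"
    and "K * ((1 + y)\<^sup>2 * y * (1 - t\<^sup>2) / ((y + t) * (1 + y * t))\<^sup>2) = C * (1 - a) * (1 + b) * a"
    and "K * ((1 - y\<^sup>2) / (1 + y * t)\<^sup>2) = C * a * (1 - b) * b"
proof -
  define D where "D = y + t"
  have nz: "C \<noteq> 0" "D \<noteq> 0" using assms by (simp_all add: C_def D_def)
  have a: "a = (1 + y)\<^sup>2 * t / (D * C)" and b: "b = D / C"
    by (simp_all add: a_def b_def cpk_subst_def exc_subst_def C_def D_def)
  have "1 - a = (D * C - (1 + y)\<^sup>2 * t) / (D * C)" using nz by (simp add: a field_simps)
  also have "D * C - (1 + y)\<^sup>2 * t = y * (1 - t)\<^sup>2"
    by (simp add: C_def D_def power2_eq_square algebra_simps)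
  finally have one_minus_a: "1 - a = y * (1 - t)\<^sup>2 / (D * C)" .
  have "1 + b = (C + D) / C" "1 - b = (C - D) / C" using nz by (simp_all add: b field_simps)
  moreover have "C + D = (1 + y) * (1 + t)" "C - D = (1 - y) * (1 - t)"
    by (simp_all add: C_def D_def algebra_simps)
  ultimately have one_plus_b: "1 + b = (1 + y) * (1 + t) / C"
    and one_minus_b: "1 - b = (1 - y) * (1 - t) / C" by simp_all
  have "1 - t\<^sup>2 = (1 - t) * (1 + t)" "1 - y\<^sup>2 = (1 - y) * (1 + y)"
    by (simp_all add: power2_eq_square algebra_simps)
  then show "K * ((1 + y)\<^sup>2 * y * (1 - t\<^sup>2) / ((y + t) * (1 + y * t))\<^sup>2) = C * (1 - a) * (1 + b) * a"
    and "K * ((1 - y\<^sup>2) / (1 + y * t)\<^sup>2) = C * a * (1 - b) * b"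
    unfolding one_minus_a one_plus_b one_minus_b D_def[symmetric] C_def[symmetric] K_def
    using nz by (simp_all add: a b field_simps power2_eq_square)
  have "C * a * b = (1 + y)\<^sup>2 * t / C" using nz by (simp add: a b field_simps power2_eq_square)
  then show "K * y = (C * a * b - (1 + y) * t) * C"
    using nz by (simp add: K_def C_def field_simps power2_eq_square)
qed

lemma scaled_deriv_power:
  fixes K r f f' :: "'a :: comm_ring_1"
  assumes "K * f' = r * f"
  shows "K * (of_nat k * (f' * f ^ (k - 1))) = of_nat k * r * f ^ k"
proof (cases k)
  case (Suc m)
  have "K * (of_nat k * (f' * f ^ (k - 1))) = of_nat k * (K * f') * f ^ m"
    using Suc by (simp add: mult_ac)
  then show ?thesis using Suc assms by (simp add: mult_ac)
qed simp

lemma subst_monomial_recurrence: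
  fixes y t :: real and n c e :: nat
  assumes "y + t \<noteq> 0" "1 + y * t \<noteq> 0"
  defines "M \<equiv> \<lambda>s. (1 + y * s) ^ n * cpk_subst y s ^ c * exc_subst y s ^ e"
    and "a \<equiv> cpk_subst y t" and "b \<equiv> exc_subst y t"
  shows "M field_differentiable at t"
    and "(1 + y * t + (1 + y) * real n * t) * M t + (1 + y) * (1 - t) * t * deriv M t
      = (1 + y * t) ^ Suc n * a ^ c * b ^ e
        * (1 + real n * a * b + real c * (1 - a) * (1 + b) + real e * a * (1 - b))"
proof -
  define K where "K = (1 + y) * (1 - t) * t"
  define C where "C = 1 + y * t"
  define da where "da = (1 + y)\<^sup>2 * y * (1 - t\<^sup>2) / ((y + t) * (1 + y * t))\<^sup>2"
  define db where "db = (1 - y\<^sup>2) / (1 + y * t)\<^sup>2"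
  have dC: "((\<lambda>s. 1 + y * s) has_field_derivative y) (at t)"
    by (auto intro!: derivative_eq_intros)
  note da = has_field_derivative_cpk_subst[OF assms(1,2), folded da_def]
    and db = has_field_derivative_exc_subst[OF assms(2), folded db_def]
  note ids = subst_deriv_identities[OF assms(1,2), folded K_def C_def a_def b_def da_def db_def]
  have D: "(M has_field_derivative
      (of_nat n * (y * C ^ (n - 1)) * a ^ c + of_nat c * (da * a ^ (c - 1)) * C ^ n) * b ^ e
      + of_nat e * (db * b ^ (e - 1)) * (C ^ n * a ^ c)) (at t)"
    unfolding M_def C_def a_def b_def
    using DERIV_mult[OF DERIV_mult[OF DERIV_power[OF dC] DERIV_power[OF da]] DERIV_power[OF db]] by simp
  then show "M field_differentiable at t" by (auto simp: field_differentiable_def)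
  have "K * deriv M t = (K * (of_nat n * (y * C ^ (n - 1)))) * a ^ c * b ^ e
      + C ^ n * (K * (of_nat c * (da * a ^ (c - 1)))) * b ^ e
      + C ^ n * a ^ c * (K * (of_nat e * (db * b ^ (e - 1))))"
    unfolding DERIV_imp_deriv[OF D] by (simp add: algebra_simps)
  also have "\<dots> = C ^ n * a ^ c * b ^ e * (n * (C * a * b - (1 + y) * t) + c * (C * (1 - a) * (1 + b))
      + e * (C * a * (1 - b)))"
    unfolding scaled_deriv_power[OF ids(1)] scaled_deriv_power[OF ids(2)] scaled_deriv_power[OF ids(3)]
    by (simp add: algebra_simps)
  finally show "(1 + y * t + (1 + y) * real n * t) * M t + (1 + y) * (1 - t) * t * deriv M t
      = (1 + y * t) ^ Suc n * a ^ c * b ^ e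
        * (1 + real n * a * b + real c * (1 - a) * (1 + b) + real e * a * (1 - b))"
    unfolding K_def C_def M_def a_def b_def by (simp add: algebra_simps)
qed

definition P_subst :: "nat \<Rightarrow> real \<Rightarrow> real \<Rightarrow> real" where
  "P_subst n y t = (1 + y * t) ^ n * P_cpk_exc n (cpk_subst y t) (exc_subst y t)"

lemma P_subst_Suc:
  assumes "y + t \<noteq> 0" "1 + y * t \<noteq> 0"
  shows "P_subst (Suc n) y t
    = (1 + y * t + (1 + y) * n * t) * P_subst n y t + (1 + y) * (1 - t) * t * deriv (P_subst n y) t"
proof -
  let ?M = "\<lambda>q s. (1 + y * s) ^ n * cpk_subst y s ^ cpk n q * exc_subst y s ^ exc n q"
  let ?a = "cpk_subst y t" and ?b = "exc_subst y t"
  note M = subst_monomial_recurrence[OF assms, of n]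
  have P: "P_subst n y = (\<lambda>s. \<Sum>q | q permutes {1..n}. ?M q s)"
    by (simp add: fun_eq_iff P_subst_def P_cpk_exc_def sum_distrib_left mult_ac)
  have "(1 + y * t + (1 + y) * n * t) * P_subst n y t + (1 + y) * (1 - t) * t * deriv (P_subst n y) t
      = (\<Sum>q | q permutes {1..n}.
          (1 + y * t + (1 + y) * n * t) * ?M q t + (1 + y) * (1 - t) * t * deriv (?M q) t)"
    unfolding P using M(1) by (simp add: sum.distrib sum_distrib_left)
  also have "\<dots> = (1 + y * t) ^ Suc n * (\<Sum>q | q permutes {1..n}. ?a ^ cpk n q * ?b ^ exc n q
      * (1 + n * ?a * ?b + cpk n q * (1 - ?a) * (1 + ?b) + exc n q * ?a * (1 - ?b)))"
    unfolding M(2) sum_distrib_left by (simp add: mult_ac)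
  also have "\<dots> = P_subst (Suc n) y t"
    unfolding P_subst_def P_cpk_exc_Suc ..
  finally show ?thesis ..
qed

lemma deriv_recurrence_unique:
  fixes F G :: "nat \<Rightarrow> real \<Rightarrow> real"
  assumes "open S" "t \<in> S"
    and "\<And>t. t \<in> S \<Longrightarrow> F 0 t = G 0 t"
    and "\<And>n t. t \<in> S \<Longrightarrow> F (Suc n) t = c n t * F n t + d t * deriv (F n) t"
    and "\<And>n t. t \<in> S \<Longrightarrow> G (Suc n) t = c n t * G n t + d t * deriv (G n) t"
  shows "F n t = G n t"
  using assms(2)
proof (induction n arbitrary: t)
  case 0
  then show ?case by (rule assms(3))
next
  case (Suc n)
  have "eventually (\<lambda>s. F n s = G n s) (nhds t)"
    using eventually_nhds_in_open[OF assms(1) Suc.prems] by (rule eventually_mono) (rule Suc.IH)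
  then have "deriv (F n) t = deriv (G n) t" by (rule deriv_cong_ev) simp
  then show ?case using assms(4,5)[OF Suc.prems] Suc.IH[OF Suc.prems] by simp
qed

lemma Bpoly_0: "Bpoly 0 y t = 1"
proof -
  have "signed_words 0 = {[]}" by (auto simp: signed_words_def)
  then show ?thesis by (simp add: Bpoly_eq_sum_signed_words negatives_def)
qed

lemma P_cpk_exc_0: "P_cpk_exc 0 a b = 1"
  by (simp add: P_cpk_exc_def permutes_empty cpk_def exc_def)

theorem Bpoly_eq_P_subst:
  assumes "y + t \<noteq> 0" "1 + y * t \<noteq> 0"
  shows "Bpoly n y t = P_subst n y t"
proof (rule deriv_recurrence_unique[where F = "\<lambda>n. Bpoly n y" and G = "\<lambda>n. P_subst n y"
      and S = "{s. y + s \<noteq> 0 \<and> 1 + y * s \<noteq> 0}"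
      and c = "\<lambda>n s. 1 + y * s + (1 + y) * n * s" and d = "\<lambda>s. (1 + y) * (1 - s) * s"])
  show "open {s. y + s \<noteq> 0 \<and> 1 + y * s \<noteq> 0}"
    unfolding Collect_conj_eq by (intro open_Int open_Collect_neq continuous_intros)
  show "t \<in> {s. y + s \<noteq> 0 \<and> 1 + y * s \<noteq> 0}" using assms by simp
  show "Bpoly 0 y s = P_subst 0 y s" for s
    by (simp add: Bpoly_0 P_subst_def P_cpk_exc_0)
qed (auto intro: Bpoly_Suc P_subst_Suc)

section \<open>Inverting the substitution\<close>

lemma subst_inverse:
  fixes y t :: real
  assumes "y \<noteq> 0" "y \<noteq> 1" "t \<noteq> 0" "(1 + t)\<^sup>2 - 4 * y * t \<ge> 0"
  defines "u \<equiv> (1 + t\<^sup>2 - 2 * y * t - (1 - t) * sqrt ((1 + t)\<^sup>2 - 4 * y * t)) / (2 * (1 - y) * t)"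
    and "v \<equiv> ((1 + t)\<^sup>2 - 2 * y * t - (1 + t) * sqrt ((1 + t)\<^sup>2 - 4 * y * t)) / (2 * y * t)"
  assumes uv: "1 + u * v \<noteq> 0"
  shows "u + v \<noteq> 0" "cpk_subst u v = y" "exc_subst u v = t"
proof -
  define s where "s = sqrt ((1 + t)\<^sup>2 - 4 * y * t)"
  have s2: "s\<^sup>2 = (1 + t)\<^sup>2 - 4 * y * t" unfolding s_def using assms(4) by simp
  define U where "U = 1 + t\<^sup>2 - 2 * y * t - (1 - t) * s"
  define V where "V = (1 + t)\<^sup>2 - 2 * y * t - (1 + t) * s"
  define \<alpha> where "\<alpha> = 2 * (1 - y) * t"
  define \<beta> where "\<beta> = 2 * y * t"
  have nz: "\<alpha> \<noteq> 0" "\<beta> \<noteq> 0" using assms(1-3) by (simp_all add: \<alpha>_def \<beta>_def)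
  have u: "u = U / \<alpha>" and v: "v = V / \<beta>"
    unfolding u_def v_def U_def V_def \<alpha>_def \<beta>_def s_def by simp_all
  have p1: "U * \<beta> + V * \<alpha> = t * (\<alpha> * \<beta> + U * V)"
    using s2 unfolding U_def V_def \<alpha>_def \<beta>_def by algebra
  have p2: "(\<alpha> + U)\<^sup>2 * V * \<beta> = y * (U * \<beta> + V * \<alpha>) * (\<alpha> * \<beta> + U * V)"
    using s2 unfolding U_def V_def \<alpha>_def \<beta>_def by algebra
  have sum_uv: "u + v = (U * \<beta> + V * \<alpha>) / (\<alpha> * \<beta>)"
    and prod_uv: "1 + u * v = (\<alpha> * \<beta> + U * V) / (\<alpha> * \<beta>)"
    unfolding u v using nz by (simp_all add: field_simps)
  have sum_eq: "u + v = t * (1 + u * v)" unfolding sum_uv prod_uv p1 by simp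
  have "(1 + u)\<^sup>2 * v = (\<alpha> + U)\<^sup>2 * V * \<beta> / ((\<alpha> * \<beta>) * (\<alpha> * \<beta>))"
    unfolding u v using nz by (simp add: field_simps power2_eq_square)
  then have sq_eq: "(1 + u)\<^sup>2 * v = y * (u + v) * (1 + u * v)"
    unfolding p2 sum_uv prod_uv by simp
  show "u + v \<noteq> 0" using sum_eq assms(3) uv by simp
  then show "cpk_subst u v = y" using sq_eq uv by (simp add: cpk_subst_def)
  show "exc_subst u v = t" using sum_eq uv by (simp add: exc_subst_def field_simps)
qed

lemma P_cpk_exc_eq_Bpoly_subst_inverse:
  fixes y t :: real
  assumes "y \<noteq> 0" "y \<noteq> 1" "t \<noteq> 0" "(1 + t)\<^sup>2 - 4 * y * t \<ge> 0"
  defines "u \<equiv> (1 + t\<^sup>2 - 2 * y * t - (1 - t) * sqrt ((1 + t)\<^sup>2 - 4 * y * t)) / (2 * (1 - y) * t)"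
    and "v \<equiv> ((1 + t)\<^sup>2 - 2 * y * t - (1 + t) * sqrt ((1 + t)\<^sup>2 - 4 * y * t)) / (2 * y * t)"
  assumes uv: "1 + u * v \<noteq> 0"
  shows "P_cpk_exc n y t = Bpoly n u v / (1 + u * v) ^ n"
proof -
  note inv = subst_inverse[OF assms(1-4), folded u_def v_def, OF uv]
  have "Bpoly n u v = P_subst n u v" using inv(1) uv by (rule Bpoly_eq_P_subst)
  then show ?thesis using uv by (simp add: P_subst_def inv(2,3))
qed

theorem theorem3p16:
  fixes n :: nat
  assumes "n \<ge> 1"
  shows "(\<forall>y t :: real. y + t \<noteq> 0 \<longrightarrow> 1 + y * t \<noteq> 0 \<longrightarrow>
            Bpoly n y t = (1 + y * t) ^ n *
              P_cpk_exc n ((1 + y)\<^sup>2 * t / ((y + t) * (1 + y * t))) ((y + t) / (1 + y * t)))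
       \<and> (\<forall>y t :: real. y \<noteq> 0 \<longrightarrow> y \<noteq> 1 \<longrightarrow> t \<noteq> 0 \<longrightarrow> (1 + t)\<^sup>2 - 4 * y * t \<ge> 0 \<longrightarrow>
            (let u = (1 + t\<^sup>2 - 2 * y * t - (1 - t) * sqrt ((1 + t)\<^sup>2 - 4 * y * t)) / (2 * (1 - y) * t);
                 v = ((1 + t)\<^sup>2 - 2 * y * t - (1 + t) * sqrt ((1 + t)\<^sup>2 - 4 * y * t)) / (2 * y * t)
             in 1 + u * v \<noteq> 0 \<longrightarrow> P_cpk_exc n y t = Bpoly n u v / (1 + u * v) ^ n))"
  unfolding Let_def
  using Bpoly_eq_P_subst[unfolded P_subst_def cpk_subst_def exc_subst_def]
    P_cpk_exc_eq_Bpoly_subst_inverse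
  by blast

end
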